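(* Let $P$ be the Borel probability measure on $\mathbb{R}$ with density $f(x)=(3/2)^n$ if $x\in J_n:=[1-\frac{1}{3^{n-1}},1-\frac{2}{3^n}]$ for some $n\in\mathbb{N}$, and $f(x)=0$ otherwise. Let $\alpha=\{a_1,a_2,a_3\}$ be an optimal set of three-means for $P$ with $a_1<a_2<a_3$. Then $a_1=\frac16$, $a_2=\frac{13}{18}$, $a_3=\frac{17}{18}$, and the corresponding quantization error is $V_3=\frac{29}{5508}$.
   Context: $\mathbb{N}=\{1,2,\dots\}$. For $n\in\mathbb{N}$, the $n$th quantization error of $P$ is $V_n=\inf\{\int\min_{a\in\alpha}(x-a)^2\,dP(x):\alpha\subset\mathbb{R},\ \mathrm{card}(\alpha)\le n\}$, and an optimal set of $n$-means is a set $\alpha$ with $\mathrm{card}(\alpha)\le n$ attaining this infimum. *)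

theory Defs
  imports "HOL-Analysis.Analysis"
begin

definition J :: "nat \<Rightarrow> real set" where
  "J n = {1 - 1 / 3 ^ (n - 1) .. 1 - 2 / 3 ^ n}"

definition dens :: "real \<Rightarrow> real" where
  "dens x = (if \<exists>n\<ge>1. x \<in> J n
             then (3/2) ^ (LEAST n. n \<ge> 1 \<and> x \<in> J n) else 0)"

definition P :: "real measure" where
  "P = density lborel (\<lambda>x. ennreal (dens x))"

definition distortion :: "real measure \<Rightarrow> real set \<Rightarrow> real" where
  "distortion M \<alpha> = (\<integral>x. Min ((\<lambda>a. (x - a)\<^sup>2) ` \<alpha>) \<partial>M)"

definition quant_error :: "real measure \<Rightarrow> nat \<Rightarrow> real" where
  "quant_error M n = Inf {distortion M \<alpha> | \<alpha>. finite \<alpha> \<and> \<alpha> \<noteq> {} \<and> card \<alpha> \<le> n}"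

definition optimal_set :: "real measure \<Rightarrow> nat \<Rightarrow> real set \<Rightarrow> bool" where
  "optimal_set M n \<alpha> \<longleftrightarrow> finite \<alpha> \<and> \<alpha> \<noteq> {} \<and> card \<alpha> \<le> n
      \<and> distortion M \<alpha> = quant_error M n"

end

theory Submission
  imports Defs
begin

(* P has density 3/2 on J 1 = [0, 1/3] and 9/4 on J 2 = [2/3, 7/9]; the remaining mass 1/4 lies
   in the tail J 3, J 4, ... inside [8/9, 1] and has mean 17/18. Over an interval of length l and
   midpoint m, (x - a)^2 integrates to l^3/12 + l (a - m)^2, and against the tail to
   25/66096 + (a - 17/18)^2/4. So {1/6, 13/18, 17/18} has distortion 1/216 + 1/3888 + 25/66096,
   which is 29/5508.
   Conversely, on each piece the squared distance to the nearest of a1 < a2 < a3 is bounded below by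
   the squared distance to a single point, or by a constant. Unless a1 < 1/2 < a2, some piece is
   served so badly that the distortion exceeds 29/5508. If a1 < 1/2 < a2, the part from J 1 is at
   least 1/216 with equality only for a1 = 1/6, and the part from J 2 and the tail is at least
   1/3888 + 25/66096 with equality only for a2 = 13/18 and a3 = 17/18. *)

lemma nn_integral_Icc_power2:
  fixes l r a :: real
  assumes "l \<le> r"
  shows "(\<integral>\<^sup>+x\<in>{l..r}. ennreal ((x - a)\<^sup>2) \<partial>lborel) = ennreal ((r - l) ^ 3 / 12 + (r - l) * (a - (l + r) / 2)\<^sup>2)"
proof -
  have "(\<integral>\<^sup>+x\<in>{l..r}. ennreal ((x - a)\<^sup>2) \<partial>lborel) = (r - a) ^ 3 / 3 - (l - a) ^ 3 / 3"
    by (rule nn_integral_FTC_Icc)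
      (auto intro!: derivative_eq_intros simp: assms power2_eq_square)
  also have "(r - a) ^ 3 / 3 - (l - a) ^ 3 / 3 = (r - l) ^ 3 / 12 + (r - l) * (a - (l + r) / 2)\<^sup>2"
    by (simp add: power2_eq_square power3_eq_cube field_simps)
  finally show ?thesis .
qed

lemma nn_integral_Icc_ge_power2:
  fixes l r a :: real
  assumes "l \<le> r" "\<And>x. l \<le> x \<Longrightarrow> x \<le> r \<Longrightarrow> (x - a)\<^sup>2 \<le> f x"
  shows "ennreal ((r - l) ^ 3 / 12 + (r - l) * (a - (l + r) / 2)\<^sup>2) \<le> (\<integral>\<^sup>+x\<in>{l..r}. ennreal (f x) \<partial>lborel)"
  unfolding nn_integral_Icc_power2[OF assms(1), symmetric]
  by (intro nn_integral_mono) (auto simp: indicator_def assms(2) intro!: ennreal_leI)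

lemma nn_integral_Icc_ge_const:
  fixes l r c :: real
  assumes "l \<le> r" "0 \<le> c" "\<And>x. l \<le> x \<Longrightarrow> x \<le> r \<Longrightarrow> c \<le> f x"
  shows "ennreal (c * (r - l)) \<le> (\<integral>\<^sup>+x\<in>{l..r}. ennreal (f x) \<partial>lborel)"
proof -
  have "ennreal (c * (r - l)) = (\<integral>\<^sup>+x\<in>{l..r}. ennreal c \<partial>lborel)"
    using assms(1,2) by (simp add: nn_integral_cmult_indicator ennreal_mult)
  also have "\<dots> \<le> (\<integral>\<^sup>+x\<in>{l..r}. ennreal (f x) \<partial>lborel)"
    by (intro nn_integral_mono) (auto simp: indicator_def assms(3) intro!: ennreal_leI)
  finally show ?thesis .
qed

lemma nn_integral_Icc_ge_add:
  fixes l m r u v :: real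
  assumes "l \<le> m" "m \<le> r" "0 \<le> u" "0 \<le> v" and [measurable]: "G \<in> borel_measurable borel"
    and "ennreal u \<le> (\<integral>\<^sup>+x\<in>{l..m}. G x \<partial>lborel)" "ennreal v \<le> (\<integral>\<^sup>+x\<in>{m..r}. G x \<partial>lborel)"
  shows "ennreal (u + v) \<le> (\<integral>\<^sup>+x\<in>{l..r}. G x \<partial>lborel)"
proof -
  have "(\<integral>\<^sup>+x\<in>{l..r}. G x \<partial>lborel)
      = (\<integral>\<^sup>+x. G x * indicator {l..m} x + G x * indicator {m..r} x \<partial>lborel)"
    using AE_lborel_singleton[of m]
    by (intro nn_integral_cong_AE, eventually_elim) (use assms(1,2) in \<open>auto simp: indicator_def\<close>)
  also have "\<dots> = (\<integral>\<^sup>+x\<in>{l..m}. G x \<partial>lborel) + (\<integral>\<^sup>+x\<in>{m..r}. G x \<partial>lborel)"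
    by (rule nn_integral_add) auto
  finally show ?thesis
    using add_mono[OF assms(6,7)] assms(3,4) by simp
qed

lemma le_enn2real:
  assumes "ennreal u \<le> X" "X < top"
  shows "u \<le> enn2real X"
proof (cases "0 \<le> u")
  case True
  then show ?thesis using enn2real_mono[OF assms] by simp
next
  case False
  then show ?thesis using enn2real_nonneg[of X] by linarith
qed

definition min_sq_dist :: "real set \<Rightarrow> real \<Rightarrow> real" where
  "min_sq_dist \<alpha> x = Min ((\<lambda>a. (x - a)\<^sup>2) ` \<alpha>)"

lemma min_sq_dist_ge_iff:
  "finite \<alpha> \<Longrightarrow> \<alpha> \<noteq> {} \<Longrightarrow> c \<le> min_sq_dist \<alpha> x \<longleftrightarrow> (\<forall>a\<in>\<alpha>. c \<le> (x - a)\<^sup>2)"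
  unfolding min_sq_dist_def by simp

lemma min_sq_dist_le: "finite \<alpha> \<Longrightarrow> a \<in> \<alpha> \<Longrightarrow> min_sq_dist \<alpha> x \<le> (x - a)\<^sup>2"
  unfolding min_sq_dist_def by simp

lemma borel_measurable_min_sq_dist:
  "finite \<alpha> \<Longrightarrow> min_sq_dist \<alpha> \<in> borel_measurable borel"
  unfolding min_sq_dist_def[abs_def] by measurable

lemma power2_le_min_sq_dist:
  assumes "finite \<alpha>" "\<alpha> \<noteq> {}" "\<And>a. a \<in> \<alpha> \<Longrightarrow> \<bar>d\<bar> \<le> \<bar>x - a\<bar>"
  shows "d\<^sup>2 \<le> min_sq_dist \<alpha> x"
  using assms by (simp add: min_sq_dist_ge_iff abs_le_square_iff)

lemma min_sq_dist_eq:
  assumes "finite \<alpha>" "a \<in> \<alpha>" "\<And>b. b \<in> \<alpha> \<Longrightarrow> \<bar>x - a\<bar> \<le> \<bar>x - b\<bar>"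
  shows "min_sq_dist \<alpha> x = (x - a)\<^sup>2"
  using assms by (intro antisym min_sq_dist_le power2_le_min_sq_dist) auto

lemma power2_le_min_sq_dist3:
  "\<bar>d\<bar> \<le> \<bar>x - a1\<bar> \<Longrightarrow> \<bar>d\<bar> \<le> \<bar>x - a2\<bar> \<Longrightarrow> \<bar>d\<bar> \<le> \<bar>x - a3\<bar> \<Longrightarrow>
    d\<^sup>2 \<le> min_sq_dist {a1, a2, a3} x"
  by (rule power2_le_min_sq_dist) auto

lemma distortion_eq_integral: "distortion M \<alpha> = (\<integral>x. min_sq_dist \<alpha> x \<partial>M)"
  unfolding distortion_def min_sq_dist_def ..

lemma distortion_nonneg: "finite \<alpha> \<Longrightarrow> \<alpha> \<noteq> {} \<Longrightarrow> 0 \<le> distortion M \<alpha>"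
  unfolding distortion_eq_integral by (intro integral_nonneg_AE AE_I2) (simp add: min_sq_dist_ge_iff)

lemma quant_error_le_distortion:
  assumes "finite \<alpha>" "\<alpha> \<noteq> {}" "card \<alpha> \<le> n"
  shows "quant_error M n \<le> distortion M \<alpha>"
  unfolding quant_error_def
proof (rule cInf_lower)
  show "distortion M \<alpha> \<in> {distortion M \<alpha> |\<alpha>. finite \<alpha> \<and> \<alpha> \<noteq> {} \<and> card \<alpha> \<le> n}"
    using assms by blast
  show "bdd_below {distortion M \<alpha> |\<alpha>. finite \<alpha> \<and> \<alpha> \<noteq> {} \<and> card \<alpha> \<le> n}"
    by (rule bdd_belowI[where m = 0]) (auto intro: distortion_nonneg)
qed

lemma J_eq: "1 \<le> n \<Longrightarrow> J n = {1 - 3 / 3 ^ n .. 1 - 2 / 3 ^ n}"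
  by (cases n) (simp_all add: J_def)

lemma J_1: "J 1 = {0..1/3}" and J_2: "J 2 = {2/3..7/9}"
  by (simp_all add: J_def)

lemma J_subset_Icc:
  assumes "1 \<le> m" "m \<le> n"
  shows "J n \<subseteq> {1 - 1 / 3 ^ (m - 1) .. 1}"
proof -
  have "(3::real) ^ m \<le> 3 ^ n" using assms by (intro power_increasing) auto
  moreover have "(3::real) ^ m = 3 * 3 ^ (m - 1)" using assms by (cases m) auto
  ultimately have "3 / 3 ^ n \<le> 1 / (3::real) ^ (m - 1)" by (simp add: field_simps)
  then show ?thesis using J_eq[of n] assms by auto
qed

lemma J_disjoint:
  assumes "1 \<le> n" "n < m"
  shows "J n \<inter> J m = {}"
proof -
  have "(3::real) ^ Suc n \<le> 3 ^ m" using assms by (intro power_increasing) auto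
  moreover have "(0::real) < 3 ^ m" by simp
  ultimately have "3 * 3 ^ n < 2 * (3::real) ^ m" by (simp only: power_Suc)
  then have "1 - 2 / 3 ^ n < 1 - 3 / (3::real) ^ m" by (simp add: field_simps)
  then show ?thesis using J_eq[of n] J_eq[of m] assms by auto
qed

lemma disjoint_family_J: "disjoint_family (\<lambda>k. J (Suc k))"
  unfolding disjoint_family_on_def
  by (metis J_disjoint inf_commute le_add1 linorder_neqE_nat not_less_eq plus_1_eq_Suc)

lemma dens_eq:
  assumes "x \<in> J (Suc k)"
  shows "dens x = (3/2) ^ Suc k"
proof -
  have "(LEAST n. 1 \<le> n \<and> x \<in> J n) = Suc k"
  proof (rule Least_equality)
    show "Suc k \<le> n" if "1 \<le> n \<and> x \<in> J n" for n
      using that J_disjoint[of n "Suc k"] assms by (metis disjoint_iff not_le)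
  qed (use assms in simp)
  then show ?thesis unfolding dens_def using assms by auto
qed

lemma dens_eq_suminf:
  "ennreal (dens x) = (\<Sum>k. ennreal ((3/2) ^ Suc k) * indicator (J (Suc k)) x)"
proof (cases "\<exists>k. x \<in> J (Suc k)")
  case True
  then obtain k where k: "x \<in> J (Suc k)" by auto
  show ?thesis
    unfolding suminf_cmult_indicator[OF disjoint_family_J k] dens_eq[OF k] ..
next
  case False
  have "\<not> (\<exists>n\<ge>1. x \<in> J n)"
  proof
    assume "\<exists>n\<ge>1. x \<in> J n"
    then obtain n where "1 \<le> n" "x \<in> J n" by blast
    then have "x \<in> J (Suc (n - 1))" by simp
    with False show False by blast
  qed
  with False show ?thesis unfolding dens_def by simp
qed

lemma J_sets [measurable]: "J n \<in> sets borel"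
  by (simp add: J_def)

lemma dens_measurable [measurable]: "(\<lambda>x. ennreal (dens x)) \<in> borel_measurable borel"
  by (subst dens_eq_suminf) measurable

lemma nn_integral_P:
  assumes [measurable]: "G \<in> borel_measurable borel"
  shows "(\<integral>\<^sup>+x. G x \<partial>P) = (\<Sum>k. ennreal ((3/2) ^ Suc k) * (\<integral>\<^sup>+x\<in>J (Suc k). G x \<partial>lborel))"
proof -
  have "(\<integral>\<^sup>+x. G x \<partial>P) = (\<integral>\<^sup>+x. ennreal (dens x) * G x \<partial>lborel)"
    unfolding P_def by (rule nn_integral_density) auto
  also have "\<dots> = (\<integral>\<^sup>+x. (\<Sum>k. ennreal ((3/2) ^ Suc k) * (G x * indicator (J (Suc k)) x)) \<partial>lborel)"
    by (subst dens_eq_suminf) (simp add: ac_simps)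
  also have "\<dots> = (\<Sum>k. ennreal ((3/2) ^ Suc k) * (\<integral>\<^sup>+x\<in>J (Suc k). G x \<partial>lborel))"
    by (subst nn_integral_suminf) (measurable, simp add: nn_integral_cmult)
  finally show ?thesis .
qed

definition tail_integral :: "(real \<Rightarrow> ennreal) \<Rightarrow> ennreal" where
  "tail_integral G = (\<Sum>k. ennreal ((3/2) ^ (k + 3)) * (\<integral>\<^sup>+x\<in>J (k + 3). G x \<partial>lborel))"

lemma nn_integral_P_split:
  assumes [measurable]: "G \<in> borel_measurable borel"
  shows "(\<integral>\<^sup>+x. G x \<partial>P) = ennreal (3/2) * (\<integral>\<^sup>+x\<in>J 1. G x \<partial>lborel)
    + ennreal (9/4) * (\<integral>\<^sup>+x\<in>J 2. G x \<partial>lborel) + tail_integral G"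
proof -
  let ?f = "\<lambda>k. ennreal ((3/2) ^ Suc k) * (\<integral>\<^sup>+x\<in>J (Suc k). G x \<partial>lborel)"
  have "(\<integral>\<^sup>+x. G x \<partial>P) = (\<Sum>k. ?f (k + 2)) + (\<Sum>k<2. ?f k)"
    unfolding nn_integral_P[OF assms] by (rule suminf_offset) simp
  also have "(\<Sum>k. ?f (k + 2)) = tail_integral G"
    unfolding tail_integral_def by (simp add: eval_nat_numeral)
  finally show ?thesis by (simp add: numeral_2_eq_2 power2_eq_square ac_simps)
qed

lemma tail_term_power2:
  fixes a :: real
  assumes "1 \<le> n"
  defines "R \<equiv> (1 - a)\<^sup>2 * (1/2) ^ n - 5 * (1 - a) * (1/6) ^ n + 19/3 * (1/18) ^ n"
  shows "ennreal ((3/2) ^ n) * (\<integral>\<^sup>+x\<in>J n. ennreal ((x - a)\<^sup>2) \<partial>lborel) = ennreal R"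
    and "0 \<le> R"
proof -
  define t :: real where "t = (1/3) ^ n"
  define q where "q = ((1 - 2 * t) - (1 - 3 * t)) ^ 3 / 12
    + ((1 - 2 * t) - (1 - 3 * t)) * (a - ((1 - 3 * t) + (1 - 2 * t)) / 2)\<^sup>2"
  have t: "0 \<le> t" "(3/2) ^ n * t = (1/2) ^ n" "(3/2) ^ n * t\<^sup>2 = (1/6) ^ n" "(3/2) ^ n * t ^ 3 = (1/18) ^ n"
    unfolding t_def power2_eq_square power3_eq_cube
    by (simp_all add: mult.assoc[symmetric] flip: power_mult_distrib)
  have "J n = {1 - 3 * t .. 1 - 2 * t}"
    unfolding J_eq[OF assms(1)] t_def by (simp add: power_one_over)
  then have integral: "(\<integral>\<^sup>+x\<in>J n. ennreal ((x - a)\<^sup>2) \<partial>lborel) = ennreal q"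
    unfolding q_def using nn_integral_Icc_power2[of "1 - 3 * t" "1 - 2 * t" a] t(1) by (simp only:)
  have q_eq: "q = (1 - a)\<^sup>2 * t - 5 * (1 - a) * t\<^sup>2 + 19/3 * t ^ 3"
    unfolding q_def by (simp add: power2_eq_square power3_eq_cube field_simps)
  have "(3/2) ^ n * q = (1 - a)\<^sup>2 * ((3/2) ^ n * t) - 5 * (1 - a) * ((3/2) ^ n * t\<^sup>2) + 19/3 * ((3/2) ^ n * t ^ 3)"
    unfolding q_eq by (simp add: algebra_simps)
  then have R_eq: "R = (3/2) ^ n * q"
    unfolding R_def t(2-4) ..
  moreover have q_nonneg: "0 \<le> q"
    unfolding q_def using t(1) by simp
  ultimately show "0 \<le> R" by simp
  show "ennreal ((3/2) ^ n) * (\<integral>\<^sup>+x\<in>J n. ennreal ((x - a)\<^sup>2) \<partial>lborel) = ennreal R"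
    unfolding integral R_eq by (simp add: ennreal_mult q_nonneg)
qed

lemma tail_integral_power2:
  "tail_integral (\<lambda>x. ennreal ((x - a)\<^sup>2)) = ennreal (25/66096 + (a - 17/18)\<^sup>2 / 4)"
proof -
  define T where "T k = (1 - a)\<^sup>2 * (1/2) ^ (k + 3) - 5 * (1 - a) * (1/6) ^ (k + 3) + 19/3 * (1/18) ^ (k + 3)"
    for k :: nat
  have geometric: "(\<lambda>k. c ^ (k + 3)) sums (c ^ 3 / (1 - c))" if "\<bar>c\<bar> < 1" for c :: real
    using sums_mult[OF geometric_sums, of c "c ^ 3"] that by (simp add: power_add mult.commute)
  have "T sums ((1 - a)\<^sup>2 * ((1/2) ^ 3 / (1 - 1/2)) - 5 * (1 - a) * ((1/6) ^ 3 / (1 - 1/6))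
      + 19/3 * ((1/18) ^ 3 / (1 - 1/18)))"
    unfolding T_def by (intro sums_add sums_diff sums_mult geometric) simp_all
  also have "\<dots> = 25/66096 + (a - 17/18)\<^sup>2 / 4"
    by (simp add: power2_eq_square power3_eq_cube field_simps)
  finally have T_sums: "T sums (25/66096 + (a - 17/18)\<^sup>2 / 4)" .
  have T_eq: "ennreal ((3/2) ^ (k + 3)) * (\<integral>\<^sup>+x\<in>J (k + 3). ennreal ((x - a)\<^sup>2) \<partial>lborel) = ennreal (T k)"
    and "0 \<le> T k" for k
    unfolding T_def by (rule tail_term_power2; simp)+
  then have "tail_integral (\<lambda>x. ennreal ((x - a)\<^sup>2)) = ennreal (\<Sum>k. T k)"
    unfolding tail_integral_def T_eq by (intro suminf_ennreal2 sums_summable[OF T_sums])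
  then show ?thesis
    using sums_unique[OF T_sums] by simp
qed

lemma tail_integral_mono:
  assumes "\<And>x. 8/9 \<le> x \<Longrightarrow> x \<le> 1 \<Longrightarrow> G x \<le> H x"
  shows "tail_integral G \<le> tail_integral H"
  unfolding tail_integral_def
proof (intro suminf_le allI mult_left_mono)
  show "(\<integral>\<^sup>+x\<in>J (k + 3). G x \<partial>lborel) \<le> (\<integral>\<^sup>+x\<in>J (k + 3). H x \<partial>lborel)" for k
    using J_subset_Icc[of 3 "k + 3"] assms
    by (intro nn_integral_mono) (auto simp: indicator_def subset_iff)
qed auto

lemma tail_integral_ge_power2:
  assumes "\<And>x. 8/9 \<le> x \<Longrightarrow> x \<le> 1 \<Longrightarrow> (x - a)\<^sup>2 \<le> f x"
  shows "ennreal (25/66096 + (a - 17/18)\<^sup>2 / 4) \<le> tail_integral (\<lambda>x. ennreal (f x))"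
  unfolding tail_integral_power2[symmetric]
  by (rule tail_integral_mono) (use assms in \<open>auto intro: ennreal_leI\<close>)

lemma emeasure_J:
  assumes "1 \<le> n"
  shows "emeasure lborel (J n) = ennreal ((1/3) ^ n)"
proof -
  have "1 - 3 / 3 ^ n \<le> (1 - 2 / 3 ^ n :: real)"
    by (simp add: field_simps)
  moreover have "(1 - 2 / 3 ^ n) - (1 - 3 / 3 ^ n) = (1/3 :: real) ^ n"
    by (simp add: power_one_over field_simps)
  ultimately show ?thesis
    using J_eq[OF assms] emeasure_lborel_Icc by metis
qed

lemma nn_integral_P_le:
  fixes f :: "real \<Rightarrow> real"
  assumes [measurable]: "f \<in> borel_measurable borel"
    and "0 \<le> K" "\<And>x. 0 \<le> x \<Longrightarrow> x \<le> 1 \<Longrightarrow> f x \<le> K"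
  shows "(\<integral>\<^sup>+x. ennreal (f x) \<partial>P) \<le> ennreal K"
proof -
  have geometric: "(\<lambda>k. K * (1/2) ^ Suc k) sums K"
    using sums_mult[OF geometric_sums, of "1/2" "K/2"] by simp
  have "ennreal ((3/2) ^ Suc k) * (\<integral>\<^sup>+x\<in>J (Suc k). ennreal (f x) \<partial>lborel) \<le> ennreal (K * (1/2) ^ Suc k)"
    for k
  proof -
    have "(\<integral>\<^sup>+x\<in>J (Suc k). ennreal (f x) \<partial>lborel) \<le> (\<integral>\<^sup>+x\<in>J (Suc k). ennreal K \<partial>lborel)"
      using J_subset_Icc[of 1 "Suc k"] assms(3)
      by (intro nn_integral_mono) (auto simp: indicator_def subset_iff intro!: ennreal_leI)
    also have "\<dots> = ennreal (K * (1/3) ^ Suc k)"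
      using assms(2) by (simp add: nn_integral_cmult_indicator emeasure_J ennreal_mult del: power_Suc)
    finally have "ennreal ((3/2) ^ Suc k) * (\<integral>\<^sup>+x\<in>J (Suc k). ennreal (f x) \<partial>lborel)
        \<le> ennreal ((3/2) ^ Suc k * (K * (1/3) ^ Suc k))"
      using assms(2) by (simp add: ennreal_mult mult_left_mono del: power_Suc)
    also have "(3/2) ^ Suc k * (K * (1/3) ^ Suc k) = K * (1/2 :: real) ^ Suc k"
      by (simp add: mult.left_commute flip: power_mult_distrib del: power_Suc)
    finally show ?thesis .
  qed
  then have "(\<integral>\<^sup>+x. ennreal (f x) \<partial>P) \<le> (\<Sum>k. ennreal (K * (1/2) ^ Suc k))"
    unfolding nn_integral_P[OF measurable_compose[OF assms(1) measurable_ennreal]]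
    by (intro suminf_le) auto
  also have "\<dots> = ennreal (\<Sum>k. K * (1/2) ^ Suc k)"
    using assms(2) by (intro suminf_ennreal2 sums_summable[OF geometric]) auto
  also have "(\<Sum>k. K * (1/2) ^ Suc k) = K"
    by (rule sums_unique[OF geometric, symmetric])
  finally show ?thesis .
qed

lemma integrable_P_min_sq_dist:
  assumes "finite \<alpha>" "\<alpha> \<noteq> {}"
  shows "integrable P (min_sq_dist \<alpha>)"
proof (rule integrableI_nonneg)
  show "min_sq_dist \<alpha> \<in> borel_measurable P"
    using borel_measurable_min_sq_dist[OF assms(1)] by (simp add: P_def)
  show "AE x in P. 0 \<le> min_sq_dist \<alpha> x"
    using assms by (simp add: min_sq_dist_ge_iff)
  obtain a where "a \<in> \<alpha>" using assms(2) by blast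
  have "min_sq_dist \<alpha> x \<le> (\<bar>a\<bar> + 1)\<^sup>2" if "0 \<le> x" "x \<le> 1" for x
  proof -
    have "\<bar>x - a\<bar> \<le> \<bar>a\<bar> + 1" using that by auto
    then have "(x - a)\<^sup>2 \<le> (\<bar>a\<bar> + 1)\<^sup>2" by (metis abs_ge_zero power2_abs power_mono)
    then show ?thesis using min_sq_dist_le[OF assms(1) \<open>a \<in> \<alpha>\<close>, of x] by linarith
  qed
  then have "(\<integral>\<^sup>+x. ennreal (min_sq_dist \<alpha> x) \<partial>P) \<le> ennreal ((\<bar>a\<bar> + 1)\<^sup>2)"
    using borel_measurable_min_sq_dist[OF assms(1)] by (intro nn_integral_P_le) auto
  then show "(\<integral>\<^sup>+x. ennreal (min_sq_dist \<alpha> x) \<partial>P) < \<infinity>"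
    by (simp add: le_less_trans)
qed

lemma distortion_P_split:
  assumes "finite \<alpha>" "\<alpha> \<noteq> {}"
  shows "ennreal (distortion P \<alpha>)
    = ennreal (3/2) * (\<integral>\<^sup>+x\<in>J 1. ennreal (min_sq_dist \<alpha> x) \<partial>lborel)
    + ennreal (9/4) * (\<integral>\<^sup>+x\<in>J 2. ennreal (min_sq_dist \<alpha> x) \<partial>lborel)
    + tail_integral (\<lambda>x. ennreal (min_sq_dist \<alpha> x))"
proof -
  have [measurable]: "min_sq_dist \<alpha> \<in> borel_measurable borel"
    using borel_measurable_min_sq_dist[OF assms(1)] .
  have "ennreal (distortion P \<alpha>) = (\<integral>\<^sup>+x. ennreal (min_sq_dist \<alpha> x) \<partial>P)"
    unfolding distortion_eq_integral using assms
    by (intro nn_integral_eq_integral[symmetric] integrable_P_min_sq_dist AE_I2)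
      (auto simp: min_sq_dist_ge_iff)
  also have "\<dots> = ennreal (3/2) * (\<integral>\<^sup>+x\<in>J 1. ennreal (min_sq_dist \<alpha> x) \<partial>lborel)
    + ennreal (9/4) * (\<integral>\<^sup>+x\<in>J 2. ennreal (min_sq_dist \<alpha> x) \<partial>lborel)
    + tail_integral (\<lambda>x. ennreal (min_sq_dist \<alpha> x))"
    by (rule nn_integral_P_split) measurable
  finally show ?thesis .
qed

(* enn2real maps \<infinity> to 0; the three integrals are finite by cost_integrals_finite. *)
definition cost_J1 :: "real set \<Rightarrow> real" where
  "cost_J1 \<alpha> = enn2real (\<integral>\<^sup>+x\<in>J 1. ennreal (min_sq_dist \<alpha> x) \<partial>lborel)"

definition cost_J2 :: "real set \<Rightarrow> real" where
  "cost_J2 \<alpha> = enn2real (\<integral>\<^sup>+x\<in>J 2. ennreal (min_sq_dist \<alpha> x) \<partial>lborel)"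

definition cost_tail :: "real set \<Rightarrow> real" where
  "cost_tail \<alpha> = enn2real (tail_integral (\<lambda>x. ennreal (min_sq_dist \<alpha> x)))"

lemma costs_nonneg: "0 \<le> cost_J1 \<alpha>" "0 \<le> cost_J2 \<alpha>" "0 \<le> cost_tail \<alpha>"
  by (simp_all add: cost_J1_def cost_J2_def cost_tail_def)

context
  fixes \<alpha> :: "real set"
  assumes finite: "finite \<alpha>" and nonempty: "\<alpha> \<noteq> {}"
begin

lemma cost_integrals_finite:
  "(\<integral>\<^sup>+x\<in>J 1. ennreal (min_sq_dist \<alpha> x) \<partial>lborel) < top"
  "(\<integral>\<^sup>+x\<in>J 2. ennreal (min_sq_dist \<alpha> x) \<partial>lborel) < top"
  "tail_integral (\<lambda>x. ennreal (min_sq_dist \<alpha> x)) < top"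
proof -
  have "ennreal (3/2) * (\<integral>\<^sup>+x\<in>J 1. ennreal (min_sq_dist \<alpha> x) \<partial>lborel)
      + ennreal (9/4) * (\<integral>\<^sup>+x\<in>J 2. ennreal (min_sq_dist \<alpha> x) \<partial>lborel)
      + tail_integral (\<lambda>x. ennreal (min_sq_dist \<alpha> x)) < top"
    unfolding distortion_P_split[OF finite nonempty, symmetric] by simp
  then show "(\<integral>\<^sup>+x\<in>J 1. ennreal (min_sq_dist \<alpha> x) \<partial>lborel) < top"
    "(\<integral>\<^sup>+x\<in>J 2. ennreal (min_sq_dist \<alpha> x) \<partial>lborel) < top"
    "tail_integral (\<lambda>x. ennreal (min_sq_dist \<alpha> x)) < top"
    by (auto simp: ennreal_mult_less_top)
qed

lemma distortion_P_eq_costs: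
  "distortion P \<alpha> = 3/2 * cost_J1 \<alpha> + 9/4 * cost_J2 \<alpha> + cost_tail \<alpha>"
proof -
  have "distortion P \<alpha> = enn2real (ennreal (distortion P \<alpha>))"
    using distortion_nonneg[OF finite nonempty] by simp
  also have "\<dots> = 3/2 * cost_J1 \<alpha> + 9/4 * cost_J2 \<alpha> + cost_tail \<alpha>"
    unfolding distortion_P_split[OF finite nonempty] cost_J1_def cost_J2_def cost_tail_def
    using cost_integrals_finite by (simp add: enn2real_plus enn2real_mult ennreal_mult_less_top)
  finally show ?thesis .
qed

lemma cost_J1_ge: "ennreal u \<le> (\<integral>\<^sup>+x\<in>J 1. ennreal (min_sq_dist \<alpha> x) \<partial>lborel) \<Longrightarrow> u \<le> cost_J1 \<alpha>"
  unfolding cost_J1_def by (erule le_enn2real, rule cost_integrals_finite(1))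

lemma cost_J2_ge: "ennreal u \<le> (\<integral>\<^sup>+x\<in>J 2. ennreal (min_sq_dist \<alpha> x) \<partial>lborel) \<Longrightarrow> u \<le> cost_J2 \<alpha>"
  unfolding cost_J2_def by (erule le_enn2real, rule cost_integrals_finite(2))

lemma cost_tail_ge: "ennreal u \<le> tail_integral (\<lambda>x. ennreal (min_sq_dist \<alpha> x)) \<Longrightarrow> u \<le> cost_tail \<alpha>"
  unfolding cost_tail_def by (erule le_enn2real, rule cost_integrals_finite(3))

lemma cost_J1_ge_power2:
  assumes "\<And>x. 0 \<le> x \<Longrightarrow> x \<le> 1/3 \<Longrightarrow> (x - a)\<^sup>2 \<le> min_sq_dist \<alpha> x"
  shows "1/324 + (a - 1/6)\<^sup>2 / 3 \<le> cost_J1 \<alpha>"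
proof (rule cost_J1_ge)
  have eq: "(1/3 - 0) ^ 3 / 12 + (1/3 - 0) * (a - (0 + 1/3) / 2)\<^sup>2 = 1/324 + (a - 1/6)\<^sup>2 / 3"
    by (simp add: power3_eq_cube)
  show "ennreal (1/324 + (a - 1/6)\<^sup>2 / 3) \<le> (\<integral>\<^sup>+x\<in>J 1. ennreal (min_sq_dist \<alpha> x) \<partial>lborel)"
    unfolding J_1 eq[symmetric] by (rule nn_integral_Icc_ge_power2) (use assms in auto)
qed

lemma cost_J1_ge_const:
  assumes "\<And>x. 0 \<le> x \<Longrightarrow> x \<le> 1/3 \<Longrightarrow> d\<^sup>2 \<le> min_sq_dist \<alpha> x"
  shows "d\<^sup>2 / 3 \<le> cost_J1 \<alpha>"
proof (rule cost_J1_ge)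
  show "ennreal (d\<^sup>2 / 3) \<le> (\<integral>\<^sup>+x\<in>J 1. ennreal (min_sq_dist \<alpha> x) \<partial>lborel)"
    using nn_integral_Icc_ge_const[of 0 "1/3" "d\<^sup>2"] assms unfolding J_1 by simp
qed

lemma cost_J2_ge_power2:
  assumes "\<And>x. 2/3 \<le> x \<Longrightarrow> x \<le> 7/9 \<Longrightarrow> (x - a)\<^sup>2 \<le> min_sq_dist \<alpha> x"
  shows "1/8748 + (a - 13/18)\<^sup>2 / 9 \<le> cost_J2 \<alpha>"
proof (rule cost_J2_ge)
  have eq: "(7/9 - 2/3) ^ 3 / 12 + (7/9 - 2/3) * (a - (2/3 + 7/9) / 2)\<^sup>2 = 1/8748 + (a - 13/18)\<^sup>2 / 9"
    by (simp add: power3_eq_cube)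
  show "ennreal (1/8748 + (a - 13/18)\<^sup>2 / 9) \<le> (\<integral>\<^sup>+x\<in>J 2. ennreal (min_sq_dist \<alpha> x) \<partial>lborel)"
    unfolding J_2 eq[symmetric] by (rule nn_integral_Icc_ge_power2) (use assms in auto)
qed

lemma cost_J2_ge_const:
  assumes "\<And>x. 2/3 \<le> x \<Longrightarrow> x \<le> 7/9 \<Longrightarrow> d\<^sup>2 \<le> min_sq_dist \<alpha> x"
  shows "d\<^sup>2 / 9 \<le> cost_J2 \<alpha>"
proof (rule cost_J2_ge)
  show "ennreal (d\<^sup>2 / 9) \<le> (\<integral>\<^sup>+x\<in>J 2. ennreal (min_sq_dist \<alpha> x) \<partial>lborel)"
    using nn_integral_Icc_ge_const[of "2/3" "7/9" "d\<^sup>2"] assms unfolding J_2 by simp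
qed

lemma cost_tail_ge_power2:
  assumes "\<And>x. 8/9 \<le> x \<Longrightarrow> x \<le> 1 \<Longrightarrow> (x - a)\<^sup>2 \<le> min_sq_dist \<alpha> x"
  shows "25/66096 + (a - 17/18)\<^sup>2 / 4 \<le> cost_tail \<alpha>"
  using tail_integral_ge_power2[OF assms] by (rule cost_tail_ge)

lemma cost_J1_ge_add:
  assumes "0 \<le> m" "m \<le> 1/3" "0 \<le> u" "0 \<le> v"
    and "ennreal u \<le> (\<integral>\<^sup>+x\<in>{0..m}. ennreal (min_sq_dist \<alpha> x) \<partial>lborel)"
    and "ennreal v \<le> (\<integral>\<^sup>+x\<in>{m..1/3}. ennreal (min_sq_dist \<alpha> x) \<partial>lborel)"
  shows "u + v \<le> cost_J1 \<alpha>"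
proof (rule cost_J1_ge)
  show "ennreal (u + v) \<le> (\<integral>\<^sup>+x\<in>J 1. ennreal (min_sq_dist \<alpha> x) \<partial>lborel)"
    using borel_measurable_min_sq_dist[OF finite] assms unfolding J_1
    by (intro nn_integral_Icc_ge_add[of _ m]) auto
qed

lemma cost_J2_ge_add:
  assumes "2/3 \<le> m" "m \<le> 7/9" "0 \<le> u" "0 \<le> v"
    and "ennreal u \<le> (\<integral>\<^sup>+x\<in>{2/3..m}. ennreal (min_sq_dist \<alpha> x) \<partial>lborel)"
    and "ennreal v \<le> (\<integral>\<^sup>+x\<in>{m..7/9}. ennreal (min_sq_dist \<alpha> x) \<partial>lborel)"
  shows "u + v \<le> cost_J2 \<alpha>"
proof (rule cost_J2_ge)
  show "ennreal (u + v) \<le> (\<integral>\<^sup>+x\<in>J 2. ennreal (min_sq_dist \<alpha> x) \<partial>lborel)"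
    using borel_measurable_min_sq_dist[OF finite] assms unfolding J_2
    by (intro nn_integral_Icc_ge_add[of _ m]) auto
qed

lemma distortion_P_gt_if_far_from_J1:
  assumes "\<And>a. a \<in> \<alpha> \<Longrightarrow> 1/2 \<le> a"
  shows "29/5508 < distortion P \<alpha>"
proof -
  have "(1/6)\<^sup>2 / 3 \<le> cost_J1 \<alpha>"
    using finite nonempty by (intro cost_J1_ge_const power2_le_min_sq_dist) (auto dest!: assms)
  then show ?thesis
    using costs_nonneg[of \<alpha>] unfolding distortion_P_eq_costs power2_eq_square by linarith
qed

lemma distortion_P_gt_if_far_from_J2:
  assumes "\<And>a. a \<in> \<alpha> \<Longrightarrow> a \<le> 1/2 \<or> 17/18 \<le> a"
  shows "29/5508 < distortion P \<alpha>"
proof -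
  have "(1/6)\<^sup>2 / 9 \<le> cost_J2 \<alpha>"
    using finite nonempty by (intro cost_J2_ge_const power2_le_min_sq_dist) (auto dest!: assms)
  then show ?thesis
    using costs_nonneg[of \<alpha>] unfolding distortion_P_eq_costs power2_eq_square by linarith
qed

end

lemma distortion_P_optimal: "distortion P {1/6, 13/18, 17/18} = 29/5508"
proof -
  let ?\<alpha> = "{1/6, 13/18, 17/18 :: real}"
  have near_1: "min_sq_dist ?\<alpha> x = (x - 1/6)\<^sup>2" if "0 \<le> x" "x \<le> 1/3" for x
    by (rule min_sq_dist_eq) (use that in \<open>auto simp: abs_if\<close>)
  have near_2: "min_sq_dist ?\<alpha> x = (x - 13/18)\<^sup>2" if "2/3 \<le> x" "x \<le> 7/9" for x
    by (rule min_sq_dist_eq) (use that in \<open>auto simp: abs_if\<close>)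
  have near_3: "min_sq_dist ?\<alpha> x = (x - 17/18)\<^sup>2" if "8/9 \<le> x" for x
    by (rule min_sq_dist_eq) (use that in \<open>auto simp: abs_if\<close>)
  have J1: "(\<integral>\<^sup>+x\<in>J 1. ennreal (min_sq_dist ?\<alpha> x) \<partial>lborel) = ennreal (1/324)"
  proof -
    have "(\<integral>\<^sup>+x\<in>J 1. ennreal (min_sq_dist ?\<alpha> x) \<partial>lborel) = (\<integral>\<^sup>+x\<in>{0..1/3}. ennreal ((x - 1/6)\<^sup>2) \<partial>lborel)"
      unfolding J_1 by (intro nn_integral_cong) (auto simp: indicator_def near_1)
    then show ?thesis by (simp add: nn_integral_Icc_power2 power3_eq_cube)
  qed
  have J2: "(\<integral>\<^sup>+x\<in>J 2. ennreal (min_sq_dist ?\<alpha> x) \<partial>lborel) = ennreal (1/8748)"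
  proof -
    have "(\<integral>\<^sup>+x\<in>J 2. ennreal (min_sq_dist ?\<alpha> x) \<partial>lborel) = (\<integral>\<^sup>+x\<in>{2/3..7/9}. ennreal ((x - 13/18)\<^sup>2) \<partial>lborel)"
      unfolding J_2 by (intro nn_integral_cong) (auto simp: indicator_def near_2)
    then show ?thesis by (simp add: nn_integral_Icc_power2 power3_eq_cube)
  qed
  have tail: "tail_integral (\<lambda>x. ennreal (min_sq_dist ?\<alpha> x)) = ennreal (25/66096)"
  proof -
    have "tail_integral (\<lambda>x. ennreal (min_sq_dist ?\<alpha> x)) = tail_integral (\<lambda>x. ennreal ((x - 17/18)\<^sup>2))"
      by (intro antisym tail_integral_mono) (simp_all add: near_3)
    then show ?thesis by (simp add: tail_integral_power2)
  qed
  have "ennreal (distortion P ?\<alpha>) = ennreal (29/5508)"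
    using distortion_P_split[of ?\<alpha>] J1 J2 tail by (simp flip: ennreal_mult ennreal_plus)
  then show ?thesis
    using distortion_nonneg[of ?\<alpha> P] by simp
qed

context
  fixes a1 a2 a3 :: real
  assumes a12: "a1 < a2" and a23: "a2 < a3"
begin

lemma distortion_P_eq_costs3:
  "distortion P {a1, a2, a3} = 3/2 * cost_J1 {a1, a2, a3} + 9/4 * cost_J2 {a1, a2, a3} + cost_tail {a1, a2, a3}"
  by (rule distortion_P_eq_costs) auto

lemma distortion_P_gt_if_a2_le_half_a3_le_5_6:
  assumes "a2 \<le> 1/2" "a3 \<le> 5/6"
  shows "29/5508 < distortion P {a1, a2, a3}"
proof -
  have near_a3: "(x - a3)\<^sup>2 \<le> min_sq_dist {a1, a2, a3} x" if "2/3 \<le> x" for x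
    using that assms a12 a23 by (intro power2_le_min_sq_dist3) arith+
  have "1/8748 + (a3 - 13/18)\<^sup>2 / 9 \<le> cost_J2 {a1, a2, a3}"
    by (rule cost_J2_ge_power2) (auto intro: near_a3)
  moreover have "25/66096 + (a3 - 17/18)\<^sup>2 / 4 \<le> cost_tail {a1, a2, a3}"
    by (rule cost_tail_ge_power2) (auto intro: near_a3)
  moreover have "(a3 - 13/18)\<^sup>2 + (a3 - 17/18)\<^sup>2 = 2 * (a3 - 5/6)\<^sup>2 + 2/81"
    by (simp add: power2_eq_square field_simps)
  ultimately show ?thesis
    unfolding distortion_P_eq_costs3 using zero_le_power2[of "a3 - 5/6"] costs_nonneg(1)[of "{a1, a2, a3}"] by linarith
qed

lemma distortion_P_gt_if_a2_le_half_a3_lt_8_9: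
  assumes "a2 \<le> 1/2" "5/6 < a3" "a3 < 8/9"
  shows "29/5508 < distortion P {a1, a2, a3}"
proof -
  have "ennreal ((a3 - 13/18)\<^sup>2 * (13/18 - 2/3))
      \<le> (\<integral>\<^sup>+x\<in>{2/3..13/18}. ennreal (min_sq_dist {a1, a2, a3} x) \<partial>lborel)"
    using assms a12 by (intro nn_integral_Icc_ge_const power2_le_min_sq_dist3) auto
  moreover have "ennreal ((a3 - 7/9)\<^sup>2 * (7/9 - 13/18))
      \<le> (\<integral>\<^sup>+x\<in>{13/18..7/9}. ennreal (min_sq_dist {a1, a2, a3} x) \<partial>lborel)"
    using assms a12 by (intro nn_integral_Icc_ge_const power2_le_min_sq_dist3) auto
  ultimately have "(a3 - 13/18)\<^sup>2 / 18 + (a3 - 7/9)\<^sup>2 / 18 \<le> cost_J2 {a1, a2, a3}"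
    using cost_J2_ge_add[of "{a1, a2, a3}" "13/18"] by simp
  moreover have "25/66096 + (a3 - 17/18)\<^sup>2 / 4 \<le> cost_tail {a1, a2, a3}"
    using assms a12 a23 by (intro cost_tail_ge_power2 power2_le_min_sq_dist3) auto
  moreover have "(a3 - 13/18)\<^sup>2 / 8 + (a3 - 7/9)\<^sup>2 / 8 + (a3 - 17/18)\<^sup>2 / 4 = (a3 - 61/72)\<^sup>2 / 2 + 51/10368"
    by (simp add: power2_eq_square field_simps)
  ultimately show ?thesis
    unfolding distortion_P_eq_costs3
    using zero_le_power2[of "a3 - 61/72"] costs_nonneg(1)[of "{a1, a2, a3}"] by linarith
qed

lemma distortion_P_gt_if_a2_le_half_a3_lt_17_18:
  assumes "a2 \<le> 1/2" "8/9 \<le> a3" "a3 < 17/18"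
  shows "29/5508 < distortion P {a1, a2, a3}"
proof -
  have "ennreal ((1/6)\<^sup>2 * (13/18 - 2/3))
      \<le> (\<integral>\<^sup>+x\<in>{2/3..13/18}. ennreal (min_sq_dist {a1, a2, a3} x) \<partial>lborel)"
    using assms a12 by (intro nn_integral_Icc_ge_const power2_le_min_sq_dist3) auto
  moreover have "ennreal ((a3 - 7/9)\<^sup>2 * (7/9 - 13/18))
      \<le> (\<integral>\<^sup>+x\<in>{13/18..7/9}. ennreal (min_sq_dist {a1, a2, a3} x) \<partial>lborel)"
    using assms a12 by (intro nn_integral_Icc_ge_const power2_le_min_sq_dist3) auto
  ultimately have "1/648 + (a3 - 7/9)\<^sup>2 / 18 \<le> cost_J2 {a1, a2, a3}"
    using cost_J2_ge_add[of "{a1, a2, a3}" "13/18"] by (simp add: power2_eq_square)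
  moreover have "25/66096 + (a3 - 17/18)\<^sup>2 / 4 \<le> cost_tail {a1, a2, a3}"
    using assms a12 a23 by (intro cost_tail_ge_power2 power2_le_min_sq_dist3) auto
  moreover have "(a3 - 7/9)\<^sup>2 / 8 + (a3 - 17/18)\<^sup>2 / 4 = 3 * (a3 - 8/9)\<^sup>2 / 8 + 1/432"
    by (simp add: power2_eq_square field_simps)
  ultimately show ?thesis
    unfolding distortion_P_eq_costs3
    using zero_le_power2[of "a3 - 8/9"] costs_nonneg(1)[of "{a1, a2, a3}"] by linarith
qed

lemma cost_J1_lower_bound:
  assumes "a1 < 1/2" "1/2 < a2"
  obtains L where "L \<le> 3/2 * cost_J1 {a1, a2, a3}" "1/216 \<le> L" "a1 \<noteq> 1/6 \<Longrightarrow> 1/216 < L"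
proof -
  consider "1/6 \<le> a1" | "-1/2 \<le> a1" "a1 < 1/6" | "a1 < -1/2" by linarith
  then show ?thesis
  proof cases
    case 1
    have "1/324 + (a1 - 1/6)\<^sup>2 / 3 \<le> cost_J1 {a1, a2, a3}"
      using 1 assms a23 by (intro cost_J1_ge_power2 power2_le_min_sq_dist3) auto
    then show ?thesis
      by (intro that[of "1/216 + (a1 - 1/6)\<^sup>2 / 2"]) auto
  next
    case 2
    define t where "t = (a1 + 1/2) / 2"
    have t: "0 \<le> t" "t \<le> 1/3" using 2 by (auto simp: t_def)
    have near_a1: "(x - a1)\<^sup>2 \<le> min_sq_dist {a1, a2, a3} x" if "x \<le> t" for x
      using that assms a23 unfolding t_def by (intro power2_le_min_sq_dist3) (auto simp: abs_if)
    have near_half: "(x - 1/2)\<^sup>2 \<le> min_sq_dist {a1, a2, a3} x" if "t \<le> x" "x \<le> 1/3" for x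
      using that assms a23 unfolding t_def by (intro power2_le_min_sq_dist3) (auto simp: abs_if)
    have "ennreal ((t - 0) ^ 3 / 12 + (t - 0) * (a1 - (0 + t) / 2)\<^sup>2)
        \<le> (\<integral>\<^sup>+x\<in>{0..t}. ennreal (min_sq_dist {a1, a2, a3} x) \<partial>lborel)"
      by (rule nn_integral_Icc_ge_power2) (use t near_a1 in auto)
    moreover have "ennreal ((1/3 - t) ^ 3 / 12 + (1/3 - t) * (1/2 - (t + 1/3) / 2)\<^sup>2)
        \<le> (\<integral>\<^sup>+x\<in>{t..1/3}. ennreal (min_sq_dist {a1, a2, a3} x) \<partial>lborel)"
      by (rule nn_integral_Icc_ge_power2) (use t near_half in auto)
    ultimately have "(t - 0) ^ 3 / 12 + (t - 0) * (a1 - (0 + t) / 2)\<^sup>2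
        + ((1/3 - t) ^ 3 / 12 + (1/3 - t) * (1/2 - (t + 1/3) / 2)\<^sup>2) \<le> cost_J1 {a1, a2, a3}"
      using t by (intro cost_J1_ge_add) auto
    moreover have "3/2 * ((t - 0) ^ 3 / 12 + (t - 0) * (a1 - (0 + t) / 2)\<^sup>2
        + ((1/3 - t) ^ 3 / 12 + (1/3 - t) * (1/2 - (t + 1/3) / 2)\<^sup>2))
        = 1/216 + (1/6 - a1)\<^sup>2 * (5/2 + 3 * a1) / 8"
      unfolding t_def by (simp add: power2_eq_square power3_eq_cube field_simps)
    moreover have "0 < (1/6 - a1)\<^sup>2 * (5/2 + 3 * a1) / 8"
      using 2 by simp
    ultimately show ?thesis
      by (intro that[of "1/216 + (1/6 - a1)\<^sup>2 * (5/2 + 3 * a1) / 8"]) auto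
  next
    case 3
    have "1/324 + (1/2 - 1/6)\<^sup>2 / 3 \<le> cost_J1 {a1, a2, a3}"
      using 3 assms a23 by (intro cost_J1_ge_power2 power2_le_min_sq_dist3) auto
    then show ?thesis
      by (intro that[of "1/216 + 1/18"]) (auto simp: power2_eq_square)
  qed
qed

lemma cost_J2_tail_gt_if_a3_le_5_6:
  assumes "a3 \<le> 5/6"
  shows "1/3888 + 25/66096 < 9/4 * cost_J2 {a1, a2, a3} + cost_tail {a1, a2, a3}"
proof -
  have "25/66096 + (5/6 - 17/18)\<^sup>2 / 4 \<le> cost_tail {a1, a2, a3}"
    using assms a12 a23 by (intro cost_tail_ge_power2 power2_le_min_sq_dist3) (auto simp: abs_if)
  then show ?thesis
    using costs_nonneg(2)[of "{a1, a2, a3}"] by (simp add: power2_eq_square)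
qed

lemma cost_J2_tail_gt_if_a2_ge_5_6:
  assumes "a1 < 1/2" "5/6 \<le> a2"
  shows "1/3888 + 25/66096 < 9/4 * cost_J2 {a1, a2, a3} + cost_tail {a1, a2, a3}"
proof -
  have "(1/18)\<^sup>2 / 9 \<le> cost_J2 {a1, a2, a3}"
    using assms a23 by (intro cost_J2_ge_const power2_le_min_sq_dist3) (auto simp: abs_if)
  then show ?thesis
    using costs_nonneg(3)[of "{a1, a2, a3}"] by (simp add: power2_eq_square)
qed

lemma cost_J2_tail_gt_if_a2_gt_7_9:
  assumes "a1 < 1/2" "7/9 < a2" "a2 < 5/6"
  shows "1/3888 + 25/66096 < 9/4 * cost_J2 {a1, a2, a3} + cost_tail {a1, a2, a3}"
proof -
  have "1/8748 + (a2 - 13/18)\<^sup>2 / 9 \<le> cost_J2 {a1, a2, a3}"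
    using assms a23 by (intro cost_J2_ge_power2 power2_le_min_sq_dist3) (auto simp: abs_if)
  moreover have "(1/18)\<^sup>2 \<le> (a2 - 13/18)\<^sup>2"
    using assms by (intro power_mono) auto
  ultimately show ?thesis
    using costs_nonneg(3)[of "{a1, a2, a3}"] by (simp add: power2_eq_square)
qed

lemma cost_J2_tail_gt_if_midpoint_gt_8_9:
  assumes "a1 < 1/2" "1/2 < a2" "a2 \<le> 7/9" "8/9 < (a2 + a3) / 2"
  shows "1/3888 + 25/66096 < 9/4 * cost_J2 {a1, a2, a3} + cost_tail {a1, a2, a3}"
proof -
  have "1 < a3" using assms(3,4) by (simp add: field_simps)
  have "1/8748 + (a2 - 13/18)\<^sup>2 / 9 \<le> cost_J2 {a1, a2, a3}"
    using assms by (intro cost_J2_ge_power2 power2_le_min_sq_dist3) (auto simp: abs_if)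
  moreover have "25/66096 + (1 - 17/18)\<^sup>2 / 4 \<le> cost_tail {a1, a2, a3}"
    using assms \<open>1 < a3\<close> by (intro cost_tail_ge_power2 power2_le_min_sq_dist3) (auto simp: abs_if)
  moreover have "(1 - 17/18 :: real)\<^sup>2 / 4 = 1/1296"
    by (simp add: power2_eq_square)
  ultimately show ?thesis
    using zero_le_power2[of "a2 - 13/18"] by linarith
qed

lemma cost_J2_tail_gt_if_midpoint_lt_7_9:
  assumes "a1 < 1/2" "1/2 < a2" "a2 < 5/6" "5/6 < a3" "(a2 + a3) / 2 < 7/9"
  shows "1/3888 + 25/66096 < 9/4 * cost_J2 {a1, a2, a3} + cost_tail {a1, a2, a3}"
proof -
  define b where "b = (a2 + a3) / 2"
  have b: "2/3 \<le> b" "b < 7/9" using assms by (auto simp: b_def)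
  have "ennreal ((b - 2/3) ^ 3 / 12 + (b - 2/3) * (a2 - (2/3 + b) / 2)\<^sup>2)
      \<le> (\<integral>\<^sup>+x\<in>{2/3..b}. ennreal (min_sq_dist {a1, a2, a3} x) \<partial>lborel)"
    using b assms by (intro nn_integral_Icc_ge_power2 power2_le_min_sq_dist3) (auto simp: abs_if b_def)
  moreover have "ennreal (1/324 * (7/9 - b))
      \<le> (\<integral>\<^sup>+x\<in>{b..7/9}. ennreal (min_sq_dist {a1, a2, a3} x) \<partial>lborel)"
  proof (rule nn_integral_Icc_ge_const)
    fix x assume "b \<le> x" "x \<le> 7/9"
    then have "(1/18)\<^sup>2 \<le> min_sq_dist {a1, a2, a3} x"
      using assms unfolding b_def by (intro power2_le_min_sq_dist3) (auto simp: abs_if)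
    then show "1/324 \<le> min_sq_dist {a1, a2, a3} x"
      by (simp add: power2_eq_square)
  qed (use b in auto)
  ultimately have "(b - 2/3) ^ 3 / 12 + (b - 2/3) * (a2 - (2/3 + b) / 2)\<^sup>2 + 1/324 * (7/9 - b)
      \<le> cost_J2 {a1, a2, a3}"
    using b by (intro cost_J2_ge_add) auto
  moreover have "0 \<le> (b - 2/3) * (a2 - (2/3 + b) / 2)\<^sup>2"
    using b by simp
  ultimately have "(b - 2/3) ^ 3 / 12 + 1/324 * (7/9 - b) \<le> cost_J2 {a1, a2, a3}"
    by (smt (verit))
  then have "9/4 * ((b - 2/3) ^ 3 / 12 + 1/324 * (7/9 - b)) \<le> 9/4 * cost_J2 {a1, a2, a3}"
    by (rule mult_left_mono) simp
  moreover have "9/4 * ((b - 2/3) ^ 3 / 12 + 1/324 * (7/9 - b)) = 1/3888 + 3/16 * (7/9 - b)\<^sup>2 * (1/3 - (7/9 - b))"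
    by (simp add: power2_eq_square power3_eq_cube field_simps)
  moreover have "0 < 3/16 * (7/9 - b)\<^sup>2 * (1/3 - (7/9 - b))"
    using b by (intro mult_pos_pos) auto
  ultimately have "1/3888 < 9/4 * cost_J2 {a1, a2, a3}"
    by linarith
  moreover have "25/66096 + (a3 - 17/18)\<^sup>2 / 4 \<le> cost_tail {a1, a2, a3}"
    using assms a12 by (intro cost_tail_ge_power2 power2_le_min_sq_dist3) (auto simp: abs_if)
  ultimately show ?thesis
    using zero_le_power2[of "a3 - 17/18"] by linarith
qed

lemma cost_J2_tail_ge_if_midpoint_between:
  assumes "a1 < 1/2" "a2 < 5/6" "7/9 \<le> (a2 + a3) / 2" "(a2 + a3) / 2 \<le> 8/9"
  shows "1/3888 + 25/66096 + (a2 - 13/18)\<^sup>2 / 4 + (a3 - 17/18)\<^sup>2 / 4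
    \<le> 9/4 * cost_J2 {a1, a2, a3} + cost_tail {a1, a2, a3}"
proof -
  have "1/8748 + (a2 - 13/18)\<^sup>2 / 9 \<le> cost_J2 {a1, a2, a3}"
    using assms a12 a23 by (intro cost_J2_ge_power2 power2_le_min_sq_dist3) (auto simp: abs_if)
  moreover have "25/66096 + (a3 - 17/18)\<^sup>2 / 4 \<le> cost_tail {a1, a2, a3}"
    using assms a12 a23 by (intro cost_tail_ge_power2 power2_le_min_sq_dist3) (auto simp: abs_if)
  ultimately show ?thesis by linarith
qed

lemma cost_J2_tail_lower_bound:
  assumes "a1 < 1/2" "1/2 < a2"
  obtains H where "H \<le> 9/4 * cost_J2 {a1, a2, a3} + cost_tail {a1, a2, a3}" "1/3888 + 25/66096 \<le> H"
    "\<not> (a2 = 13/18 \<and> a3 = 17/18) \<Longrightarrow> 1/3888 + 25/66096 < H"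
proof -
  note conclude = that
  have strict: thesis if "1/3888 + 25/66096 < 9/4 * cost_J2 {a1, a2, a3} + cost_tail {a1, a2, a3}"
    using that by (intro conclude[of "9/4 * cost_J2 {a1, a2, a3} + cost_tail {a1, a2, a3}"]) auto
  consider "a3 \<le> 5/6" | "5/6 \<le> a2" | "7/9 < a2" "a2 < 5/6"
    | "a2 \<le> 7/9" "5/6 < a3" "(a2 + a3) / 2 < 7/9"
    | "a2 \<le> 7/9" "7/9 \<le> (a2 + a3) / 2" "(a2 + a3) / 2 \<le> 8/9"
    | "a2 \<le> 7/9" "8/9 < (a2 + a3) / 2"
    by linarith
  then show ?thesis
  proof cases
    case 1
    then show ?thesis by (intro strict cost_J2_tail_gt_if_a3_le_5_6)
  next
    case 2
    then show ?thesis using assms by (intro strict cost_J2_tail_gt_if_a2_ge_5_6)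
  next
    case 3
    then show ?thesis using assms by (intro strict cost_J2_tail_gt_if_a2_gt_7_9)
  next
    case 4
    then show ?thesis using assms by (intro strict cost_J2_tail_gt_if_midpoint_lt_7_9) auto
  next
    case 5
    let ?H = "1/3888 + 25/66096 + (a2 - 13/18)\<^sup>2 / 4 + (a3 - 17/18)\<^sup>2 / 4"
    have "0 < (a2 - 13/18)\<^sup>2 + (a3 - 17/18)\<^sup>2" if "\<not> (a2 = 13/18 \<and> a3 = 17/18)"
      using that by (auto intro: add_pos_nonneg add_nonneg_pos)
    then show ?thesis
      using 5 assms cost_J2_tail_ge_if_midpoint_between
      by (intro conclude[of ?H]) (auto intro: add_nonneg_nonneg)
  next
    case 6
    then show ?thesis using assms by (intro strict cost_J2_tail_gt_if_midpoint_gt_8_9)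
  qed
qed

lemma distortion_P_gt_if_a2_le_half:
  assumes "a2 \<le> 1/2"
  shows "29/5508 < distortion P {a1, a2, a3}"
proof -
  consider "a3 \<le> 1/2 \<or> 17/18 \<le> a3" | "1/2 < a3" "a3 \<le> 5/6" | "5/6 < a3" "a3 < 8/9" | "8/9 \<le> a3" "a3 < 17/18"
    by linarith
  then show ?thesis
  proof cases
    case 1
    then show ?thesis
      using assms a12 by (intro distortion_P_gt_if_far_from_J2) auto
  qed (use assms distortion_P_gt_if_a2_le_half_a3_le_5_6 distortion_P_gt_if_a2_le_half_a3_lt_8_9
      distortion_P_gt_if_a2_le_half_a3_lt_17_18 in auto)
qed

lemma eq_optimal_if_distortion_P_le:
  assumes "distortion P {a1, a2, a3} \<le> 29/5508"
  shows "a1 = 1/6" "a2 = 13/18" "a3 = 17/18"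
proof -
  have "a1 < 1/2"
    using assms a12 a23 distortion_P_gt_if_far_from_J1[of "{a1, a2, a3}"] by fastforce
  moreover have "1/2 < a2"
    using assms distortion_P_gt_if_a2_le_half by fastforce
  ultimately obtain L H where
    L: "L \<le> 3/2 * cost_J1 {a1, a2, a3}" "1/216 \<le> L" "a1 \<noteq> 1/6 \<Longrightarrow> 1/216 < L" and
    H: "H \<le> 9/4 * cost_J2 {a1, a2, a3} + cost_tail {a1, a2, a3}" "1/3888 + 25/66096 \<le> H"
      "\<not> (a2 = 13/18 \<and> a3 = 17/18) \<Longrightarrow> 1/3888 + 25/66096 < H"
    using cost_J1_lower_bound cost_J2_tail_lower_bound by metis
  have "L + H \<le> 1/216 + (1/3888 + 25/66096)"
    using assms L(1) H(1) unfolding distortion_P_eq_costs3 by linarith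
  then show "a1 = 1/6" "a2 = 13/18" "a3 = 17/18"
    using L H by force+
qed

end

theorem lemma4p2:
  fixes a1 a2 a3 :: real
  assumes "optimal_set P 3 {a1, a2, a3}"
    and "a1 < a2" and "a2 < a3"
  shows "a1 = 1/6 \<and> a2 = 13/18 \<and> a3 = 17/18 \<and> quant_error P 3 = 29/5508"
proof -
  have optimal: "distortion P {a1, a2, a3} = quant_error P 3"
    using assms(1) by (simp add: optimal_set_def)
  also have "\<dots> \<le> distortion P {1/6, 13/18, 17/18}"
    by (rule quant_error_le_distortion) auto
  also have "\<dots> = 29/5508"
    by (rule distortion_P_optimal)
  finally have "distortion P {a1, a2, a3} \<le> 29/5508" .
  then have "a1 = 1/6" "a2 = 13/18" "a3 = 17/18"
    using eq_optimal_if_distortion_P_le[OF assms(2,3)] by auto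
  with optimal show ?thesis
    using distortion_P_optimal by simp
qed

end
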